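(* Let $X$ and $Q$ be defined as follows (indexed by layers $\ell\ge2$ and positions $0\le j\le n_\ell-1$, and ordered lexicographically in $(\ell,j)$, with $\vec q_0=\vec 0$ prepended to $Q$). Let $n_\ell:=\ell\lceil\ln^2\ell\rceil+1$, $\theta_\ell:=\frac{\pi}{2(n_\ell-1)}$, $\vec x_{\ell,j}:=(\cos(j\theta_\ell),\sin(j\theta_\ell))$ for even $\ell$ and $\vec x_{\ell,j}:=(\sin(j\theta_\ell),\cos(j\theta_\ell))$ for odd $\ell$. Let $\alpha:=\sum_{\ell=2}^\infty\frac1{\ell\ln^2\ell}$, $z_\ell:=\frac1\alpha\sum_{m=2}^\ell\frac1{m\ln^2 m}$ (so $z_1=0$), $\delta_\ell:=z_\ell-z_{\ell-1}=\frac{1}{\alpha\ell\ln^2\ell}$, $z_{\ell,j}:=1-\delta_\ell\cot((j+1)\theta_\ell)$ for $j<n_\ell-1$ and $z_{\ell,n_\ell-1}:=1$. For even $\ell$, $\vec q_{\ell,j}:=(z_\ell,z_{\ell,j})$; for odd $\ell$, $\vec q_{\ell,j}$ is any maximizer of $\vec x_{\ell,j}\cdot\vec q_{\ell',j'}$ over all $(\ell',j')$ with $\ell'<\ell$. Then $\mathrm{MenuGap}(X,Q)=\infty$.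
   Context: MenuGap: Let $X=(\vec x_i)_{i=1}^N$ be an ordered sequence of nonzero points of $\mathbb{R}^k_{\ge0}$ ($N$ finite or $+\infty$), and $Q=(\vec q_i)_{i=0}^N$ an ordered sequence of points of $[0,1]^k$ with $\vec q_0=(0,\dots,0)$. Define $\mathrm{gap}_i^{X,Q}:=\min_{0\le j<i}(\vec q_i-\vec q_j)\cdot\vec x_i$ and $\mathrm{MenuGap}(X,Q):=\sum_{i=1}^N \mathrm{gap}_i^{X,Q}/\|\vec x_i\|_1$. *)

theory Defs
  imports "HOL-Analysis.Analysis"
begin

definition norm1 :: "real^'k \<Rightarrow> real" where
  "norm1 x = (\<Sum>i\<in>UNIV. \<bar>x $ i\<bar>)"

definition gap :: "(nat \<Rightarrow> real^'k) \<Rightarrow> (nat \<Rightarrow> real^'k) \<Rightarrow> nat \<Rightarrow> real" where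
  "gap X Q i = Min {(Q i - Q j) \<bullet> X i | j. j < i}"

definition menugap_partial :: "(nat \<Rightarrow> real^'k) \<Rightarrow> (nat \<Rightarrow> real^'k) \<Rightarrow> nat \<Rightarrow> real" where
  "menugap_partial X Q N = (\<Sum>i\<in>{1..N}. gap X Q i / norm1 (X i))"

definition menugap_infinite :: "(nat \<Rightarrow> real^'k) \<Rightarrow> (nat \<Rightarrow> real^'k) \<Rightarrow> bool" where
  "menugap_infinite X Q \<longleftrightarrow> filterlim (menugap_partial X Q) at_top sequentially"

definition nl :: "nat \<Rightarrow> nat" where
  "nl l = l * nat \<lceil>(ln (real l))^2\<rceil> + 1"

definition theta :: "nat \<Rightarrow> real" where
  "theta l = pi / (2 * (real (nl l) - 1))"

definition xvec :: "nat \<Rightarrow> nat \<Rightarrow> real^2" where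
  "xvec l j = (if even l then vector [cos (real j * theta l), sin (real j * theta l)]
               else vector [sin (real j * theta l), cos (real j * theta l)])"

definition alpha :: real where
  "alpha = (\<Sum>m. 1 / (real (m + 2) * (ln (real (m + 2)))^2))"

definition zl :: "nat \<Rightarrow> real" where
  "zl l = (1 / alpha) * (\<Sum>m\<in>{2..l}. 1 / (real m * (ln (real m))^2))"

definition delta :: "nat \<Rightarrow> real" where
  "delta l = 1 / (alpha * real l * (ln (real l))^2)"

definition zlj :: "nat \<Rightarrow> nat \<Rightarrow> real" where
  "zlj l j = (if j < nl l - 1 then 1 - delta l * cot (real (j + 1) * theta l) else 1)"

definition qeven :: "nat \<Rightarrow> nat \<Rightarrow> real^2" where
  "qeven l j = vector [zl l, zlj l j]"

text \<open>Position of (l,j) in the lexicographic order, counting from 1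
  (index 0 is reserved for q_0 = 0).\<close>
definition pos :: "nat \<Rightarrow> nat \<Rightarrow> nat" where
  "pos l j = 1 + (\<Sum>m\<in>{2..<l}. nl m) + j"

end

theory Submission
  imports Defs
begin

text \<open>
  On an even layer \<open>l\<close> every menu item has first coordinate \<open>z\<^sub>l\<close>, while every earlier item
  \<open>q\<close> satisfies \<open>q \<le> (z\<^sub>l\<^sub>-\<^sub>1, 1)\<close> coordinatewise, because odd layers only copy earlier items.
  The second coordinates \<open>z\<^sub>l\<^sub>,\<^sub>j\<close> are tuned by cotangents so that, in direction \<open>x\<^sub>l\<^sub>,\<^sub>j\<close>, the
  \<open>j\<close>-th item beats every earlier item by at least \<open>\<delta>\<^sub>l / (j + 1)\<close>; this comes down to
  \<open>cos (j\<theta>) - cot ((j+1)\<theta>) sin (j\<theta>) = sin \<theta> / sin ((j+1)\<theta>) \<ge> 1 / (j + 1)\<close>.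
  Summing over the layer, it contributes at least \<open>\<delta>\<^sub>l ln n\<^sub>l / 2 \<ge> 1 / (2 \<alpha> l ln l)\<close> to the
  MenuGap. Odd layers choose a best earlier item, so their gaps are nonnegative, and
  \<open>\<Sum> 1 / (l ln l)\<close> over the even \<open>l\<close> diverges.
\<close>

section \<open>The normalising constant and a divergent series\<close>

lemma summable_inverse_mult_ln_squared:
  "summable (\<lambda>m. 1 / (real (m + 2) * (ln (real (m + 2)))^2))"
proof -
  define f :: "nat \<Rightarrow> real" where "f n = 1 / (real (n + 1) * (ln (real (n + 1)))^2)" for n
  have "f (Suc m) \<le> f m" if "0 < m" for m
    unfolding f_def using that by (intro divide_left_mono mult_mono power_mono) auto
  moreover have "summable (\<lambda>n. 2 ^ n * f (2 ^ n))"
  proof (rule summable_comparison_test_ev)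
    show "summable (\<lambda>n. inverse ((ln 2)^2) * inverse (real n ^ 2))"
      by (intro summable_mult inverse_power_summable) simp
    show "\<forall>\<^sub>F n in sequentially. norm (2 ^ n * f (2 ^ n)) \<le> inverse ((ln 2)^2) * inverse (real n ^ 2)"
      using eventually_gt_at_top[of "0::nat"]
    proof eventually_elim
      case (elim n)
      have pos: "0 < real n * ln 2" using elim by simp
      have "real n * ln 2 = ln (2 ^ n)" by (simp add: ln_realpow)
      also have "\<dots> \<le> ln (real (2 ^ n + 1))" by (intro ln_mono) auto
      finally have sq: "(real n * ln 2)^2 \<le> (ln (real (2 ^ n + 1)))^2"
        using pos by (intro power_mono) auto
      have "2 ^ n * f (2 ^ n) \<le> real (2 ^ n + 1) / (real (2 ^ n + 1) * (ln (real (2 ^ n + 1)))^2)"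
        unfolding f_def times_divide_eq_right mult_1_right by (intro divide_right_mono) auto
      also have "\<dots> = 1 / (ln (real (2 ^ n + 1)))^2" by simp
      also have "\<dots> \<le> 1 / (real n * ln 2)^2"
      proof -
        have "0 < (real n * ln 2)^2" using pos by (rule zero_less_power)
        moreover from this sq have "0 < (ln (real (2 ^ n + 1)))^2" by linarith
        ultimately show ?thesis by (intro divide_left_mono[OF sq] mult_pos_pos) simp_all
      qed
      also have "\<dots> = inverse ((ln 2)^2) * inverse (real n ^ 2)"
        by (simp add: power_mult_distrib field_simps)
      finally show ?case by (simp add: f_def)
    qed
  qed
  ultimately have "summable f" using condensation_test[of f] by (simp add: f_def)
  then show ?thesis
    by (subst (asm) summable_Suc_iff[symmetric]) (simp add: f_def add.commute)
qed

lemma alpha_pos: "0 < alpha"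
  unfolding alpha_def by (rule suminf_pos[OF summable_inverse_mult_ln_squared]) simp

lemma not_summable_inverse_mult_ln_even:
  "\<not> summable (\<lambda>k. 1 / (real (2 * k + 2) * ln (real (2 * k + 2))))"
proof
  define f :: "nat \<Rightarrow> real" where "f k = 1 / (real (2 * k + 2) * ln (real (2 * k + 2)))" for k
  assume "summable f"
  moreover have "f (Suc k) \<le> f k" for k
    unfolding f_def by (intro divide_left_mono mult_mono) auto
  ultimately have "summable (\<lambda>n. 2 ^ n * f (2 ^ n))"
    using condensation_test[of f] by (simp add: f_def)
  moreover have "norm (inverse (4 * ln 2) * inverse (real (n + 2))) \<le> 2 ^ n * f (2 ^ n)" for n
  proof -
    have le: "real (2 * 2 ^ n + 2) \<le> 4 * 2 ^ n" by simp
    have "ln (real (2 * 2 ^ n + 2)) \<le> ln (2 ^ (n + 2))"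
      using le by (intro ln_mono) (auto simp: power_add add_pos_nonneg)
    also have "\<dots> = real (n + 2) * ln 2" by (rule ln_realpow)
    finally have "real (2 * 2 ^ n + 2) * ln (real (2 * 2 ^ n + 2)) \<le> 2 ^ n * (4 * (real (n + 2) * ln 2))"
      using le by (subst mult.assoc[symmetric], intro mult_mono) auto
    moreover have "0 < ln (real (2 * 2 ^ n + 2))"
      by (intro ln_gt_zero) (simp add: add_pos_nonneg)
    ultimately have "2 ^ n / (2 ^ n * (4 * (real (n + 2) * ln 2))) \<le> 2 ^ n * f (2 ^ n)"
      unfolding f_def times_divide_eq_right mult_1_right
      by (intro divide_left_mono mult_pos_pos) (simp_all add: add_pos_nonneg)
    then show ?thesis by (simp add: inverse_eq_divide mult_ac)
  qed
  ultimately have "summable (\<lambda>n. inverse (4 * ln 2) * inverse (real (n + 2)))"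
    by (rule summable_comparison_test'[where N = 0])
  then have "summable (\<lambda>n. inverse (real (n + 2)))" by simp
  then have "summable (\<lambda>n. inverse (real n))"
    by (rule summable_iff_shift[of "\<lambda>n. inverse (real n)" 2, THEN iffD1])
  with not_summable_harmonic[where 'a = real] show False by (rule notE)
qed

section \<open>Layers, angles and positions\<close>

lemma nl_gt: "2 \<le> l \<Longrightarrow> l < nl l"
proof -
  assume "2 \<le> l"
  then have "0 < (ln (real l))^2" by simp
  then have "1 \<le> nat \<lceil>(ln (real l))^2\<rceil>" by linarith
  then have "l * 1 \<le> l * nat \<lceil>(ln (real l))^2\<rceil>" by (rule mult_le_mono2)
  then show ?thesis unfolding nl_def mult_1_right by linarith
qed

lemma theta_pos: "2 \<le> l \<Longrightarrow> 0 < theta l"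
  using nl_gt[of l] unfolding theta_def by simp

lemma nl_minus_one_mult_theta: "2 \<le> l \<Longrightarrow> real (nl l - 1) * theta l = pi / 2"
proof -
  assume "2 \<le> l"
  then have "real (nl l - 1) = real (nl l) - 1" "0 < real (nl l) - 1"
    using nl_gt[of l] by (auto simp: of_nat_diff)
  then show ?thesis unfolding theta_def by (simp add: field_simps)
qed

lemma mult_theta_le_pi_half: "2 \<le> l \<Longrightarrow> j \<le> nl l - 1 \<Longrightarrow> real j * theta l \<le> pi / 2"
  using nl_minus_one_mult_theta[of l] theta_pos[of l] by (metis mult_right_mono of_nat_mono less_imp_le)

lemma inner_vec2: "(a :: real^2) \<bullet> b = a $ 1 * b $ 1 + a $ 2 * b $ 2"
  unfolding inner_vec_def sum_2 by simp

lemma norm1_vec2: "norm1 (a :: real^2) = \<bar>a $ 1\<bar> + \<bar>a $ 2\<bar>"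
  unfolding norm1_def sum_2 by simp

lemma xvec_nonneg:
  assumes "2 \<le> l" "j < nl l"
  shows "0 \<le> xvec l j $ 1" "0 \<le> xvec l j $ 2"
proof -
  have "0 \<le> real j * theta l" using theta_pos[OF assms(1)] by simp
  moreover have "real j * theta l \<le> pi / 2" using mult_theta_le_pi_half[OF assms(1)] assms(2) by simp
  ultimately have "0 \<le> cos (real j * theta l)" "0 \<le> sin (real j * theta l)"
    by (auto intro: cos_ge_zero sin_ge_zero)
  then show "0 \<le> xvec l j $ 1" "0 \<le> xvec l j $ 2"
    unfolding xvec_def by auto
qed

lemma norm1_xvec_pos: "0 < norm1 (xvec l j)"
  and norm1_xvec_le_2: "norm1 (xvec l j) \<le> 2"
proof -
  define a where "a = real j * theta l"
  have n: "norm1 (xvec l j) = \<bar>cos a\<bar> + \<bar>sin a\<bar>"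
    unfolding norm1_vec2 xvec_def a_def by auto
  have "cos a \<noteq> 0 \<or> sin a \<noteq> 0" using sin_zero_abs_cos_one[of a] by auto
  then show "0 < norm1 (xvec l j)" unfolding n by auto
  show "norm1 (xvec l j) \<le> 2" unfolding n using abs_sin_le_one[of a] abs_cos_le_one[of a] by linarith
qed

lemma pos_eq_add: "pos l j = pos l 0 + j"
  unfolding pos_def by simp

lemma pos_Suc_0: "2 \<le> l \<Longrightarrow> pos (Suc l) 0 = pos l 0 + nl l"
  unfolding pos_def by simp

lemma pos_0_mono: "l \<le> l' \<Longrightarrow> pos l 0 \<le> pos l' 0"
  unfolding pos_def by (simp add: sum_mono2)

lemma pos_ge_1: "1 \<le> pos l j"
  unfolding pos_def by simp

lemma pos_exhaust:
  "1 \<le> k \<Longrightarrow> \<exists>l j. 2 \<le> l \<and> j < nl l \<and> k = pos l j"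
proof (induction k rule: nat_induct_at_least)
  case base
  have "1 = pos 2 0" "0 < nl 2" unfolding pos_def nl_def by simp_all
  then show ?case by blast
next
  case (Suc k)
  then obtain l j where lj: "2 \<le> l" "j < nl l" "k = pos l j" by blast
  show ?case
  proof (cases "Suc j < nl l")
    case True
    then show ?thesis using lj unfolding pos_def by (intro exI[of _ l] exI[of _ "Suc j"]) simp
  next
    case False
    then have "Suc k = pos (Suc l) 0"
      using lj pos_Suc_0[of l] pos_eq_add[of l j] by simp
    moreover have "0 < nl (Suc l)" unfolding nl_def by simp
    ultimately show ?thesis using lj by (intro exI[of _ "Suc l"] exI[of _ 0]) auto
  qed
qed

lemma pos_less_imp_lex:
  assumes "2 \<le> l" "j < nl l" "pos l' j' < pos l j"
  shows "l' < l \<or> (l' = l \<and> j' < j)"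
proof -
  have "\<not> l < l'"
  proof
    assume "l < l'"
    then have "pos (Suc l) 0 \<le> pos l' 0" by (intro pos_0_mono) simp
    then show False
      using assms pos_Suc_0[of l] pos_eq_add[of l j] pos_eq_add[of l' j'] by simp
  qed
  moreover have "l' = l \<Longrightarrow> j' < j"
    using assms pos_eq_add[of l j] pos_eq_add[of l j'] by simp
  ultimately show ?thesis by linarith
qed

lemma less_pos_cases:
  assumes "2 \<le> l" "j < nl l" "k < pos l j"
  obtains "k = 0"
    | l' j' where "2 \<le> l'" "l' < l" "j' < nl l'" "k = pos l' j'"
    | j' where "j' < j" "k = pos l j'"
proof (cases "k = 0")
  case False
  then obtain l' j' where "2 \<le> l'" "j' < nl l'" "k = pos l' j'" using pos_exhaust[of k] by auto
  with assms pos_less_imp_lex[of l j l' j'] that show ?thesis by auto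
qed (use that in blast)

lemma sum_atLeastAtMost_1_add:
  "(\<Sum>i\<in>{1..N + n}. t i) = (\<Sum>i\<in>{1..N}. t i) + (\<Sum>j<n. t (N + 1 + j :: nat) :: 'a :: comm_monoid_add)"
  by (induction n) (simp_all add: add.commute add.left_commute)

lemma sum_atLeastAtMost_1_pos_0:
  fixes t :: "nat \<Rightarrow> 'a :: comm_monoid_add"
  assumes "2 \<le> l"
  shows "(\<Sum>i\<in>{1..pos l 0 - 1}. t i) = (\<Sum>m\<in>{2..<l}. \<Sum>j<nl m. t (pos m j))"
  using assms
proof (induction l rule: nat_induct_at_least)
  case base
  then show ?case unfolding pos_def by simp
next
  case (Suc l)
  define N where "N = pos l 0 - 1"
  have last: "pos (Suc l) 0 - 1 = N + nl l"
    using pos_Suc_0[OF Suc(1)] pos_ge_1[of l 0] unfolding N_def by simp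
  have shift: "pos l j = N + 1 + j" for j
    using pos_eq_add[of l j] pos_ge_1[of l 0] unfolding N_def by linarith
  have "(\<Sum>i\<in>{1..pos (Suc l) 0 - 1}. t i) = (\<Sum>i\<in>{1..N}. t i) + (\<Sum>j<nl l. t (pos l j))"
    unfolding last shift by (rule sum_atLeastAtMost_1_add)
  also have "\<dots> = (\<Sum>m\<in>{2..<Suc l}. \<Sum>j<nl m. t (pos m j))"
    using Suc unfolding N_def by simp
  finally show ?case .
qed

lemma zl_nonneg: "0 \<le> zl l"
  unfolding zl_def using alpha_pos by (intro mult_nonneg_nonneg sum_nonneg) auto

lemma zl_mono: "l \<le> l' \<Longrightarrow> zl l \<le> zl l'"
  unfolding zl_def using alpha_pos by (intro mult_left_mono sum_mono2) auto

lemma delta_pos: "2 \<le> l \<Longrightarrow> 0 < delta l"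
  unfolding delta_def using alpha_pos by simp

lemma zl_minus_zl_pred: "2 \<le> l \<Longrightarrow> zl l - zl (l - 1) = delta l"
proof -
  assume "2 \<le> l"
  then have "{2..l} = insert l {2..l - 1}" by auto
  then have "(\<Sum>m\<in>{2..l}. 1 / (real m * (ln (real m))^2))
      = 1 / (real l * (ln (real l))^2) + (\<Sum>m\<in>{2..l - 1}. 1 / (real m * (ln (real m))^2))"
    by (simp only:) (subst sum.insert, auto)
  then show ?thesis unfolding zl_def delta_def by (simp add: algebra_simps)
qed


section \<open>The even layers\<close>

lemma abs_sin_mult_le: "\<bar>sin (real k * x)\<bar> \<le> real k * \<bar>sin x\<bar>"
proof (induction k)
  case (Suc k)
  have "\<bar>sin (real (Suc k) * x)\<bar> = \<bar>sin (real k * x) * cos x + cos (real k * x) * sin x\<bar>"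
    by (simp add: distrib_right sin_add algebra_simps)
  also have "\<dots> \<le> \<bar>sin (real k * x)\<bar> * \<bar>cos x\<bar> + \<bar>cos (real k * x)\<bar> * \<bar>sin x\<bar>"
    by (metis abs_mult abs_triangle_ineq)
  also have "\<dots> \<le> \<bar>sin (real k * x)\<bar> + \<bar>sin x\<bar>"
    by (intro add_mono) (auto intro: mult_left_le mult_left_le_one_le)
  finally show ?case using Suc by (simp add: distrib_right)
qed simp

lemma cot_antimono:
  assumes "0 < a" "a \<le> b" "b \<le> pi / 2"
  shows "cot b \<le> cot a"
  using tan_mono_le[of "pi / 2 - b" "pi / 2 - a"] assms pi_gt_zero by (simp add: tan_cot')

lemma cot_nonneg: "0 < a \<Longrightarrow> a \<le> pi / 2 \<Longrightarrow> 0 \<le> cot a"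
  using cot_antimono[of a "pi / 2"] by (simp add: cot_def)

lemma cos_minus_cot_mult_sin_ge:
  assumes "0 < t" "real (j + 1) * t \<le> pi / 2"
  shows "1 / real (j + 1) \<le> cos (real j * t) - cot (real (j + 1) * t) * sin (real j * t)"
proof -
  define b where "b = real j * t"
  have bt: "real (j + 1) * t = b + t" unfolding b_def by (simp add: distrib_right)
  have "0 < real (j + 1) * t" using assms(1) by simp
  then have pos: "0 < sin (b + t)"
    using assms(2) pi_gt_zero unfolding bt[symmetric] by (intro sin_gt_zero) linarith+
  have "cos b - cot (b + t) * sin b = (sin (b + t) * cos b - cos (b + t) * sin b) / sin (b + t)"
    using pos by (simp add: cot_def field_simps)
  also have "\<dots> = sin t / sin (b + t)"
    using sin_diff[of "b + t" b] by simp
  finally have eq: "cos b - cot (b + t) * sin b = sin t / sin (b + t)" .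
  have "t \<le> real (j + 1) * t" using mult_right_mono[of 1 "real (j + 1)" t] assms(1) by simp
  then have "0 \<le> sin t" using assms pi_gt_zero by (intro sin_ge_zero) linarith+
  then have "sin (b + t) \<le> real (j + 1) * sin t"
    using abs_sin_mult_le[of "j + 1" t] pos unfolding bt by simp
  then show ?thesis
    using pos unfolding eq bt b_def[symmetric] by (simp add: field_simps)
qed

lemma zlj_le_1: "2 \<le> l \<Longrightarrow> zlj l j \<le> 1"
  using theta_pos[of l] mult_theta_le_pi_half[of l "j + 1"] delta_pos[of l]
    cot_nonneg[of "real (j + 1) * theta l"]
  unfolding zlj_def by (auto intro: mult_nonneg_nonneg)

definition gap_bound :: "nat \<Rightarrow> nat \<Rightarrow> real" where
  "gap_bound l j = (if j < nl l - 1 then delta l / real (j + 1) else 0)"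

lemma gap_bound_nonneg: "2 \<le> l \<Longrightarrow> 0 \<le> gap_bound l j"
  unfolding gap_bound_def using delta_pos[of l] by simp

lemma inner_qeven_minus_lower_ge:
  assumes l: "2 \<le> l" "even l" and j: "j < nl l" and q: "q $ 1 \<le> zl (l - 1)" "q $ 2 \<le> 1"
  shows "gap_bound l j \<le> (qeven l j - q) \<bullet> xvec l j"
proof -
  define c s where "c = cos (real j * theta l)" and "s = sin (real j * theta l)"
  have x: "xvec l j $ 1 = c" "xvec l j $ 2 = s" unfolding xvec_def c_def s_def using l by simp_all
  have cs: "0 \<le> c" "0 \<le> s" using xvec_nonneg[OF l(1) j] x by simp_all
  have "delta l * c + (zlj l j - 1) * s \<le> (qeven l j - q) \<bullet> xvec l j"
    unfolding inner_vec2 x qeven_def using q cs zl_minus_zl_pred[OF l(1)]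
    by (intro add_mono mult_right_mono) auto
  moreover have "gap_bound l j \<le> delta l * c + (zlj l j - 1) * s"
  proof (cases "j < nl l - 1")
    case True
    have "1 / real (j + 1) \<le> c - cot (real (j + 1) * theta l) * s"
      unfolding c_def s_def using theta_pos[OF l(1)] mult_theta_le_pi_half[OF l(1), of "j + 1"] True
      by (intro cos_minus_cot_mult_sin_ge) auto
    then have "delta l * (1 / real (j + 1)) \<le> delta l * (c - cot (real (j + 1) * theta l) * s)"
      using delta_pos[OF l(1)] by (intro mult_left_mono) auto
    then show ?thesis
      using True unfolding gap_bound_def zlj_def by (simp add: algebra_simps)
  next
    case False
    then show ?thesis using cs delta_pos[OF l(1)] unfolding gap_bound_def zlj_def by simp
  qed
  ultimately show ?thesis by linarith
qed

lemma inner_qeven_minus_same_layer_ge: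
  assumes l: "2 \<le> l" "even l" and j: "j < nl l" and j': "j' < j"
  shows "gap_bound l j \<le> (qeven l j - qeven l j') \<bullet> xvec l j"
proof -
  define s where "s = sin (real j * theta l)"
  have inner: "(qeven l j - qeven l j') \<bullet> xvec l j = (zlj l j - zlj l j') * s"
    unfolding inner_vec2 qeven_def xvec_def s_def using l by simp
  have s: "0 \<le> s" using xvec_nonneg(2)[OF l(1) j] l unfolding xvec_def s_def by simp
  show ?thesis
  proof (cases "j < nl l - 1")
    case False
    then show ?thesis
      unfolding inner gap_bound_def using zlj_le_1[OF l(1), of j'] s by (simp add: zlj_def)
  next
    case True
    have th: "0 < theta l" by (rule theta_pos[OF l(1)])
    have angle: "0 < real j * theta l" "real j * theta l \<le> pi / 2"
      using th j' True mult_theta_le_pi_half[OF l(1), of j] by auto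
    have "0 < s"
      unfolding s_def using angle pi_gt_zero by (intro sin_gt_zero) linarith+
    then have cot_s: "cot (real j * theta l) * s = cos (real j * theta l)"
      unfolding s_def cot_def by simp
    have "gap_bound l j = delta l * (1 / real (j + 1))"
      using True unfolding gap_bound_def by simp
    also have "\<dots> \<le> delta l * (cos (real j * theta l) - cot (real (j + 1) * theta l) * s)"
      unfolding s_def using th mult_theta_le_pi_half[OF l(1), of "j + 1"] True delta_pos[OF l(1)]
      by (intro mult_left_mono cos_minus_cot_mult_sin_ge) auto
    also have "\<dots> = delta l * (cot (real j * theta l) - cot (real (j + 1) * theta l)) * s"
      unfolding cot_s[symmetric] by (simp add: algebra_simps)
    also have "\<dots> \<le> delta l * (cot (real (j' + 1) * theta l) - cot (real (j + 1) * theta l)) * s"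
      using th j' angle delta_pos[OF l(1)] \<open>0 < s\<close>
      by (intro mult_right_mono mult_left_mono diff_right_mono cot_antimono) auto
    also have "\<dots> = (qeven l j - qeven l j') \<bullet> xvec l j"
      unfolding inner zlj_def using True j' by (simp add: algebra_simps)
    finally show ?thesis .
  qed
qed


section \<open>Gaps of the construction\<close>

lemma gap_geI:
  fixes X Q :: "nat \<Rightarrow> real^'k"
  assumes "0 < i" "\<And>j. j < i \<Longrightarrow> b \<le> (Q i - Q j) \<bullet> X i"
  shows "b \<le> gap X Q i"
proof -
  have "{(Q i - Q j) \<bullet> X i | j. j < i} = (\<lambda>j. (Q i - Q j) \<bullet> X i) ` {..<i}" by auto
  then show ?thesis unfolding gap_def using assms by (subst Min_ge_iff) auto
qed

lemma norm1_nonneg: "0 \<le> norm1 x"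
  unfolding norm1_def by (simp add: sum_nonneg)

lemma not_summable_nonneg_unbounded:
  fixes f :: "nat \<Rightarrow> real"
  assumes "\<And>n. 0 \<le> f n" "\<not> summable f"
  shows "\<exists>n. B \<le> (\<Sum>k<n. f k)"
  using summableI_nonneg_bounded[of f B] assms by (meson linear)

lemma menugap_infiniteI:
  fixes X Q :: "nat \<Rightarrow> real^'k"
  assumes "\<And>i. 1 \<le> i \<Longrightarrow> 0 \<le> gap X Q i" "\<And>B. \<exists>N. B \<le> menugap_partial X Q N"
  shows "menugap_infinite X Q"
  unfolding menugap_infinite_def filterlim_at_top
proof
  fix B
  obtain N where N: "B \<le> menugap_partial X Q N" using assms(2) by blast
  have mono: "menugap_partial X Q N \<le> menugap_partial X Q N'" if "N \<le> N'" for N'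
    unfolding menugap_partial_def using that assms(1) norm1_nonneg
    by (intro sum_mono2) (auto intro: divide_nonneg_nonneg)
  show "\<forall>\<^sub>F N' in sequentially. B \<le> menugap_partial X Q N'"
    using eventually_ge_at_top[of N] by eventually_elim (meson N mono order.trans)
qed

locale menu_construction =
  fixes X Q :: "nat \<Rightarrow> real^2"
  assumes X_pos: "\<And>l j. 2 \<le> l \<Longrightarrow> j < nl l \<Longrightarrow> X (pos l j) = xvec l j"
    and Q_0: "Q 0 = 0"
    and Q_even: "\<And>l j. 2 \<le> l \<Longrightarrow> even l \<Longrightarrow> j < nl l \<Longrightarrow> Q (pos l j) = qeven l j"
    and Q_odd_earlier: "\<And>l j. 2 \<le> l \<Longrightarrow> odd l \<Longrightarrow> j < nl l \<Longrightarrow>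
      \<exists>l' j'. 2 \<le> l' \<and> l' < l \<and> j' < nl l' \<and> Q (pos l j) = Q (pos l' j')"
    and Q_odd_max: "\<And>l j l' j'. 2 \<le> l \<Longrightarrow> odd l \<Longrightarrow> j < nl l \<Longrightarrow> 2 \<le> l' \<Longrightarrow> l' < l \<Longrightarrow>
      j' < nl l' \<Longrightarrow> xvec l j \<bullet> Q (pos l' j') \<le> xvec l j \<bullet> Q (pos l j)"
begin

lemma Q_pos_le: "2 \<le> l \<Longrightarrow> j < nl l \<Longrightarrow> Q (pos l j) $ 1 \<le> zl l \<and> Q (pos l j) $ 2 \<le> 1"
proof (induction l arbitrary: j rule: less_induct)
  case (less l)
  show ?case
  proof (cases "even l")
    case True
    then show ?thesis using less.prems Q_even zlj_le_1 by (simp add: qeven_def)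
  next
    case False
    then obtain l' j' where "2 \<le> l'" "l' < l" "j' < nl l'" "Q (pos l j) = Q (pos l' j')"
      using Q_odd_earlier less.prems by blast
    with less.IH zl_mono[of l' l] show ?thesis by fastforce
  qed
qed

lemma gap_odd_nonneg:
  assumes l: "2 \<le> l" "odd l" and j: "j < nl l"
  shows "0 \<le> gap X Q (pos l j)"
proof (rule gap_geI)
  show "0 < pos l j" using pos_ge_1[of l j] by simp
  fix k assume k: "k < pos l j"
  from l(1) j k have "xvec l j \<bullet> Q k \<le> xvec l j \<bullet> Q (pos l j)"
  proof (cases rule: less_pos_cases)
    case 1
    \<comment> \<open>\<open>Q 0 = 0\<close> is beaten by the last item \<open>(zl 2, 1)\<close> of layer 2, a point of the positive quadrant.\<close>
    define j2 where "j2 = nl 2 - 1"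
    have j2: "j2 < nl 2" unfolding j2_def using nl_gt[of 2] by simp
    have "2 < l" using l by presburger
    have "Q (pos 2 j2) = vector [zl 2, 1]"
      using Q_even[of 2 j2] j2 unfolding qeven_def zlj_def j2_def by simp
    then have "0 \<le> xvec l j \<bullet> Q (pos 2 j2)"
      unfolding inner_vec2 using xvec_nonneg[OF l(1) j] zl_nonneg[of 2] by simp
    also have "\<dots> \<le> xvec l j \<bullet> Q (pos l j)" using Q_odd_max l j j2 \<open>2 < l\<close> by simp
    finally show ?thesis using 1 Q_0 by simp
  next
    case (2 l' j')
    then show ?thesis using Q_odd_max l j by simp
  next
    case (3 j')
    then obtain l' j'' where "2 \<le> l'" "l' < l" "j'' < nl l'" "Q k = Q (pos l' j'')"
      using Q_odd_earlier[OF l] j by (metis order.strict_trans)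
    then show ?thesis using Q_odd_max l j by simp
  qed
  then show "0 \<le> (Q (pos l j) - Q k) \<bullet> X (pos l j)"
    unfolding X_pos[OF l(1) j] inner_diff_left by (simp add: inner_commute)
qed

lemma gap_even_ge:
  assumes l: "2 \<le> l" "even l" and j: "j < nl l"
  shows "gap_bound l j \<le> gap X Q (pos l j)"
proof (rule gap_geI)
  show "0 < pos l j" using pos_ge_1[of l j] by simp
  fix k assume k: "k < pos l j"
  from l(1) j k have "gap_bound l j \<le> (qeven l j - Q k) \<bullet> xvec l j"
  proof (cases rule: less_pos_cases)
    case 1
    then show ?thesis
      using Q_0 zl_nonneg[of "l - 1"] by (intro inner_qeven_minus_lower_ge[OF l j]) simp_all
  next
    case (2 l' j')
    moreover have "zl l' \<le> zl (l - 1)" using \<open>l' < l\<close> by (intro zl_mono) simp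
    ultimately show ?thesis
      using Q_pos_le[of l' j'] by (intro inner_qeven_minus_lower_ge[OF l j]) auto
  next
    case (3 j')
    then show ?thesis
      using Q_even[OF l] j inner_qeven_minus_same_layer_ge[OF l j] by simp
  qed
  then show "gap_bound l j \<le> (Q (pos l j) - Q k) \<bullet> X (pos l j)"
    using X_pos l j Q_even l j by simp
qed

lemma gap_nonneg: "1 \<le> i \<Longrightarrow> 0 \<le> gap X Q i"
  using pos_exhaust[of i] gap_even_ge gap_bound_nonneg gap_odd_nonneg by (metis order.trans)

lemma layer_term_nonneg: "0 \<le> gap X Q (pos l j) / norm1 (X (pos l j))"
  using gap_nonneg[OF pos_ge_1] norm1_nonneg by (rule divide_nonneg_nonneg)

lemma gap_bound_half_le:
  assumes l: "2 \<le> l" "even l" and j: "j < nl l"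
  shows "gap_bound l j / 2 \<le> gap X Q (pos l j) / norm1 (X (pos l j))"
proof -
  have g: "0 \<le> gap_bound l j" "gap_bound l j \<le> gap X Q (pos l j)"
    using gap_bound_nonneg[OF l(1)] gap_even_ge[OF l j] by auto
  then have "gap_bound l j / 2 \<le> gap X Q (pos l j) / 2" by simp
  also have "\<dots> \<le> gap X Q (pos l j) / norm1 (xvec l j)"
    using g norm1_xvec_pos norm1_xvec_le_2 by (intro divide_left_mono) auto
  finally show ?thesis using X_pos l(1) j by simp
qed

lemma even_layer_sum_ge:
  assumes l: "2 \<le> l" "even l"
  shows "1 / (2 * alpha * (real l * ln (real l)))
    \<le> (\<Sum>j<nl l. gap X Q (pos l j) / norm1 (X (pos l j)))"
proof -
  have "1 / (2 * alpha * (real l * ln (real l))) = delta l / 2 * ln (real l)"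
    using l(1) alpha_pos unfolding delta_def by (simp add: power2_eq_square field_simps)
  also have "\<dots> \<le> delta l / 2 * harm (nl l - 1)"
  proof -
    have "ln (real l) \<le> ln (real (nl l - 1) + 1)"
      using l(1) nl_gt[of l] by (intro ln_mono) auto
    then show ?thesis
      using ln_le_harm[of "nl l - 1"] delta_pos[OF l(1)] by (intro mult_left_mono) auto
  qed
  also have "\<dots> = (\<Sum>j<nl l - 1. gap_bound l j / 2)"
    unfolding harm_altdef sum_distrib_left gap_bound_def by (intro sum.cong) (auto simp: field_simps)
  also have "\<dots> \<le> (\<Sum>j<nl l - 1. gap X Q (pos l j) / norm1 (X (pos l j)))"
    using gap_bound_half_le[OF l] by (intro sum_mono) auto
  also have "\<dots> \<le> (\<Sum>j<nl l. gap X Q (pos l j) / norm1 (X (pos l j)))"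
    using layer_term_nonneg by (intro sum_mono2) auto
  finally show ?thesis .
qed

lemma menugap_partial_ge:
  "(\<Sum>k<K. 1 / (real (2 * k + 2) * ln (real (2 * k + 2)))) / (2 * alpha)
    \<le> menugap_partial X Q (pos (2 * K + 2) 0 - 1)"
proof -
  define L where "L m = (\<Sum>j<nl m. gap X Q (pos m j) / norm1 (X (pos m j)))" for m
  have "(\<Sum>k<K. 1 / (real (2 * k + 2) * ln (real (2 * k + 2)))) / (2 * alpha)
      = (\<Sum>k<K. 1 / (2 * alpha * (real (2 * k + 2) * ln (real (2 * k + 2)))))"
    by (simp add: sum_divide_distrib mult_ac)
  also have "\<dots> \<le> (\<Sum>k<K. L (2 * k + 2))"
    unfolding L_def by (intro sum_mono even_layer_sum_ge) auto
  also have "\<dots> = (\<Sum>m\<in>(\<lambda>k. 2 * k + 2) ` {..<K}. L m)"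
    by (subst sum.reindex) (auto simp: inj_on_def)
  also have "\<dots> \<le> (\<Sum>m\<in>{2..<2 * K + 2}. L m)"
    unfolding L_def using layer_term_nonneg by (intro sum_mono2 sum_nonneg) auto
  also have "\<dots> = menugap_partial X Q (pos (2 * K + 2) 0 - 1)"
    unfolding menugap_partial_def L_def by (rule sum_atLeastAtMost_1_pos_0[symmetric]) simp
  finally show ?thesis .
qed

lemma menugap_infinite: "menugap_infinite X Q"
proof (rule menugap_infiniteI)
  show "0 \<le> gap X Q i" if "1 \<le> i" for i by (rule gap_nonneg[OF that])
  fix B
  obtain K where "2 * alpha * B \<le> (\<Sum>k<K. 1 / (real (2 * k + 2) * ln (real (2 * k + 2))))"
    using not_summable_nonneg_unbounded[OF _ not_summable_inverse_mult_ln_even] by fastforce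
  then have "B \<le> (\<Sum>k<K. 1 / (real (2 * k + 2) * ln (real (2 * k + 2)))) / (2 * alpha)"
    using alpha_pos by (simp add: field_simps)
  then show "\<exists>N. B \<le> menugap_partial X Q N"
    using menugap_partial_ge[of K] by (blast intro: order.trans)
qed

end

theorem proposition5p8:
  fixes X Q :: "nat \<Rightarrow> real^2"
  assumes X_def: "\<forall>l\<ge>2. \<forall>j<nl l. X (pos l j) = xvec l j"
    and Q0: "Q 0 = 0"
    and Q_even: "\<forall>l\<ge>2. even l \<longrightarrow> (\<forall>j<nl l. Q (pos l j) = qeven l j)"
    and Q_odd_mem: "\<forall>l\<ge>2. odd l \<longrightarrow> (\<forall>j<nl l.
           (\<exists>l' j'. 2 \<le> l' \<and> l' < l \<and> j' < nl l' \<and> Q (pos l j) = Q (pos l' j')))"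
    and Q_odd_max: "\<forall>l\<ge>2. odd l \<longrightarrow> (\<forall>j<nl l. \<forall>l' j'. 2 \<le> l' \<and> l' < l \<and> j' < nl l' \<longrightarrow>
           xvec l j \<bullet> Q (pos l' j') \<le> xvec l j \<bullet> Q (pos l j))"
  shows "menugap_infinite X Q"
proof -
  interpret menu_construction X Q
    by unfold_locales (simp_all add: X_def Q0 Q_even Q_odd_max, use Q_odd_mem in blast)
  show ?thesis by (rule menugap_infinite)
qed

end
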